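(* Let $P\subset N_{\mathbb{R}}$ be a lattice polytope. If $(m,Q)$ is a deformation pair of $P$, then there exist Laurent polynomials $f,g\in\mathbb{C}[N]$ with $\Delta(f)=P$ and $\Delta(g)=Q$ such that $f$ is $(m,g)$-mutable. Conversely, if a Laurent polynomial $f$ is $(m,g)$-mutable, then $(m,\Delta(g))$ is a deformation pair of $\Delta(f)$.
   Context: $N\cong\mathbb{Z}^n$ a lattice, $M$ its dual, $\widetilde M=M\oplus\mathbb{Z}$ with projections $\pi_M,\pi_{\mathbb{Z}}$. For $m\in\widetilde M$, $\varphi_m(n)=\langle\pi_M(m),n\rangle+\pi_{\mathbb{Z}}(m)$ and $(\pi_M(m)=0)=\{n\in N_{\mathbb{R}}:\langle\pi_M(m),n\rangle=0\}$. $\Delta(h)$ denotes the Newton polytope; Laurent polynomials are normalized (coefficient $1$ at each vertex of the Newton polytope). A deformation pair of $P$ is $(m,Q)$ with $m\in\widetilde M$ and $Q\subset(\pi_M(m)=0)$ a lattice polytope such that for every $i\in\mathbb{N}$ with $P\cap(\varphi_m=i)\ne\emptyset$, $iQ$ is a Minkowski summand of $P\cap(\varphi_m=i)$. For $g$ with $\Delta(g)\subset(\pi_M(m)=0)$, $f$ is $(m,g)$-mutable if $f=\sum_{i\in\mathbb{Z}}f_i$ with $f_i\in\mathbb{C}[(\varphi_m=i)\cap N]$ and, for every $i\in\mathbb{N}$, $f_i=h_ig^i$ for some Laurent polynomial $h_i$. *)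

theory Defs
  imports "HOL-Analysis.Analysis" "HOL-Library.Poly_Mapping"
begin

text \<open>The lattice N = Z^n is modelled as int ^ 'n (for an arbitrary finite index type 'n),
  N_R = real ^ 'n.  The dual lattice M is also int ^ 'n, paired via the standard dot product.
  An element m of M~ = M (+) Z is a pair (u, c) with pi_M m = u and pi_Z m = c.
  Laurent polynomials in C[N] are finitely supported maps N \<Rightarrow>0 complex; the product
  of poly_mapping is the convolution, i.e. the product of Laurent polynomials.\<close>

type_synonym 'n laurent = "(int ^ 'n) \<Rightarrow>\<^sub>0 complex"

definition lat_emb :: "int ^ ('n::finite) \<Rightarrow> real ^ 'n" where
  "lat_emb v = (\<chi> i. real_of_int (v $ i))"

definition lattice_points :: "(real ^ 'n) set" where
  "lattice_points = range lat_emb"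

definition lattice_polytope :: "(real ^ 'n) set \<Rightarrow> bool" where
  "lattice_polytope P \<longleftrightarrow> (\<exists>S. finite S \<and> S \<noteq> {} \<and> S \<subseteq> lattice_points \<and> P = convex hull S)"

definition pairM :: "(int ^ 'n) \<times> int \<Rightarrow> real ^ 'n \<Rightarrow> real" where
  "pairM m x = (\<Sum>i\<in>UNIV. real_of_int (fst m $ i) * x $ i)"

definition phi :: "(int ^ 'n) \<times> int \<Rightarrow> real ^ 'n \<Rightarrow> real" where
  "phi m x = pairM m x + real_of_int (snd m)"

definition hyp0 :: "(int ^ 'n) \<times> int \<Rightarrow> (real ^ 'n) set" where
  "hyp0 m = {x. pairM m x = 0}"

definition level :: "(int ^ 'n) \<times> int \<Rightarrow> int \<Rightarrow> (real ^ 'n) set" where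
  "level m i = {x. phi m x = real_of_int i}"

definition minkowski_sum :: "(real ^ 'n) set \<Rightarrow> (real ^ 'n) set \<Rightarrow> (real ^ 'n) set" where
  "minkowski_sum A B = {a + b | a b. a \<in> A \<and> b \<in> B}"

definition minkowski_summand :: "(real ^ 'n) set \<Rightarrow> (real ^ 'n) set \<Rightarrow> bool" where
  "minkowski_summand A B \<longleftrightarrow> (\<exists>C. polytope C \<and> B = minkowski_sum A C)"

definition deformation_pair ::
  "(real ^ 'n) set \<Rightarrow> (int ^ 'n) \<times> int \<Rightarrow> (real ^ 'n) set \<Rightarrow> bool" where
  "deformation_pair P m Q \<longleftrightarrow>
     lattice_polytope Q \<and> Q \<subseteq> hyp0 m \<and>
     (\<forall>i::nat. P \<inter> level m (int i) \<noteq> {} \<longrightarrow>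
        minkowski_summand ((\<lambda>x. real i *\<^sub>R x) ` Q) (P \<inter> level m (int i)))"

definition newton :: "('n::finite) laurent \<Rightarrow> (real ^ 'n) set" where
  "newton f = convex hull (lat_emb ` Poly_Mapping.keys f)"

definition normalized :: "('n::finite) laurent \<Rightarrow> bool" where
  "normalized f \<longleftrightarrow> (\<forall>v. lat_emb v extreme_point_of newton f \<longrightarrow> Poly_Mapping.lookup f v = 1)"

definition mutable :: "('n::finite) laurent \<Rightarrow> (int ^ 'n) \<times> int \<Rightarrow> 'n laurent \<Rightarrow> bool" where
  "mutable f m g \<longleftrightarrow>
     (\<exists>fi :: int \<Rightarrow> 'n laurent.
        (\<forall>i. lat_emb ` Poly_Mapping.keys (fi i) \<subseteq> level m i) \<and>
        finite {i. fi i \<noteq> 0} \<and>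
        f = (\<Sum>i\<in>{i. fi i \<noteq> 0}. fi i) \<and>
        (\<forall>i::nat. \<exists>h. fi (int i) = h * g ^ i))"

end

theory Submission
  imports Defs
begin

(* For the forward direction take g to be the sum of the monomials at the vertices of Q.
   A vertex v of P at height n >= 0 is a vertex of the slice of P at height n, which is a
   Minkowski sum nQ + C; so v = nq + c with q a vertex of Q, and c + nQ lies in the slice.
   The piece of f at height n is h_n g^n, where h_n is the sum of the monomials at these
   points c (at negative heights, just the vertices of P there). Newton polytopes of products
   are Minkowski sums and coefficients at vertices multiply, so f has Newton polytope P and
   coefficient 1 at every vertex.

   Conversely, Newton(f_i) = Newton(h_i) + iQ, so through every monomial of f at height
   s >= 0 passes a translate of sQ contained in P = Newton(f). The points p of P through
   which P contains a translate of sQ for some s >= phi_m(p) form a convex set, hence all of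
   P. Shrinking that translate towards p yields c with c + tQ in the slice of P at height
   t = phi_m(p) (Q is parallel to the slices), and these c form a polytope complementing tQ. *)

lemma lat_emb_add: "lat_emb (a + b) = lat_emb a + lat_emb b"
  by (simp add: lat_emb_def vec_eq_iff)

lemma lat_emb_diff: "lat_emb (a - b) = lat_emb a - lat_emb b"
  by (simp add: lat_emb_def vec_eq_iff)

lemma lat_emb_0: "lat_emb 0 = 0"
  by (simp add: lat_emb_def vec_eq_iff)

lemma lat_emb_vector_scalar_mult: "lat_emb (c *s a) = real_of_int c *\<^sub>R lat_emb a"
  by (simp add: lat_emb_def vec_eq_iff)

lemma inj_lat_emb: "inj lat_emb"
  by (auto simp: inj_on_def lat_emb_def vec_eq_iff)

subsection \<open>Minkowski sums\<close>

lemma minkowski_sum_UN: "minkowski_sum A B = (\<Union>a\<in>A. \<Union>b\<in>B. {a + b})"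
  by (auto simp: minkowski_sum_def)

lemma convex_minkowski_sum: "convex A \<Longrightarrow> convex B \<Longrightarrow> convex (minkowski_sum A B)"
  by (simp add: minkowski_sum_UN convex_sums)

lemma compact_minkowski_sum: "compact A \<Longrightarrow> compact B \<Longrightarrow> compact (minkowski_sum A B)"
  by (simp add: minkowski_sum_UN compact_sums')

lemma minkowski_sum_commute: "minkowski_sum A B = minkowski_sum B A"
  unfolding minkowski_sum_def by (auto; metis add.commute)

lemma extreme_point_of_minkowski_sum:
  assumes "(a + b) extreme_point_of minkowski_sum A B" "a \<in> A" "b \<in> B"
  shows "a extreme_point_of A"
proof -
  have "(\<lambda>x. b + x) ` A \<subseteq> minkowski_sum A B"
    using assms(3) by (auto simp: minkowski_sum_def add.commute)
  then have "(b + a) extreme_point_of (\<lambda>x. b + x) ` A"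
    using assms by (auto simp: extreme_point_of_def add.commute)
  then show ?thesis
    by (simp add: extreme_point_of_translation_eq)
qed

lemma extreme_point_of_scaleR_image:
  fixes A :: "'a::real_vector set"
  assumes "c \<noteq> 0"
  shows "(c *\<^sub>R x) extreme_point_of (*\<^sub>R) c ` A \<longleftrightarrow> x extreme_point_of A"
proof -
  have inj: "inj ((*\<^sub>R) c :: 'a \<Rightarrow> 'a)"
    using assms by (auto simp: inj_on_def)
  have "open_segment (c *\<^sub>R a) (c *\<^sub>R b) = (*\<^sub>R) c ` open_segment a b" for a b :: 'a
    using open_segment_linear_image[OF linear_scaleR inj] by simp
  then show ?thesis
    using inj by (auto simp: extreme_point_of_def inj_image_mem_iff)
qed

lemma minkowski_sum_dilates:
  fixes A :: "(real ^ 'n) set"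
  assumes "convex A" "0 \<le> s" "0 \<le> t"
  shows "minkowski_sum ((*\<^sub>R) s ` A) ((*\<^sub>R) t ` A) = (*\<^sub>R) (s + t) ` A"
proof
  show "minkowski_sum ((*\<^sub>R) s ` A) ((*\<^sub>R) t ` A) \<subseteq> (*\<^sub>R) (s + t) ` A"
  proof
    fix z assume "z \<in> minkowski_sum ((*\<^sub>R) s ` A) ((*\<^sub>R) t ` A)"
    then obtain a b where ab: "a \<in> A" "b \<in> A" "z = s *\<^sub>R a + t *\<^sub>R b"
      unfolding minkowski_sum_def by blast
    show "z \<in> (*\<^sub>R) (s + t) ` A"
    proof (cases "s + t = 0")
      case True
      then have "s = 0" "t = 0" using assms by auto
      then show ?thesis using ab by (auto intro: image_eqI[OF _ ab(1)])
    next
      case False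
      define c where "c = (s / (s + t)) *\<^sub>R a + (t / (s + t)) *\<^sub>R b"
      have "c \<in> A" unfolding c_def
        using assms False by (intro convexD[OF assms(1) ab(1,2)]) (auto simp: add_divide_distrib[symmetric])
      moreover have "z = (s + t) *\<^sub>R c"
        using False by (simp add: c_def ab(3) scaleR_add_right)
      ultimately show ?thesis by blast
    qed
  qed
  show "(*\<^sub>R) (s + t) ` A \<subseteq> minkowski_sum ((*\<^sub>R) s ` A) ((*\<^sub>R) t ` A)"
    by (auto simp: minkowski_sum_def scaleR_add_left)
qed

lemma polytope_translations_into:
  fixes K :: "'a::euclidean_space set"
  assumes K: "polytope K" and S: "finite S" "S \<noteq> {}"
  shows "polytope {x. \<forall>q\<in>convex hull S. x + t *\<^sub>R q \<in> K}" (is "polytope ?C")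
proof -
  have translate: "x \<in> (\<lambda>y. y - a) ` K \<longleftrightarrow> x + a \<in> K" for x a
    by (auto intro: image_eqI[where x="x + a"])
  have "x \<in> ?C \<longleftrightarrow> S \<subseteq> {q. x + t *\<^sub>R q \<in> K}" for x
  proof
    assume "S \<subseteq> {q. x + t *\<^sub>R q \<in> K}"
    moreover have "{q. x + t *\<^sub>R q \<in> K} = (*\<^sub>R) t -` (\<lambda>y. y - x) ` K"
      by (simp add: set_eq_iff translate add.commute)
    then have "convex {q. x + t *\<^sub>R q \<in> K}"
      using K by (simp add: convex_linear_vimage linear_scaleR convex_translation_subtract
          polytope_imp_convex)
    ultimately show "x \<in> ?C"
      by (auto dest: hull_minimal)
  qed (auto simp: hull_inc)
  then have C_eq: "?C = (\<Inter>q\<in>S. (\<lambda>y. y - t *\<^sub>R q) ` K)"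
    by (auto simp: translate)
  have translate_polytope: "polytope ((\<lambda>y. y - a) ` K)" for a
    using K polytope_translation_eq[of "- a" K] by simp
  obtain q0 where "q0 \<in> S"
    using S by blast
  then have "bounded ?C"
    using translate_polytope unfolding C_eq by (meson INF_lower bounded_subset polytope_imp_bounded)
  moreover have "polyhedron ?C"
    unfolding C_eq using S by (auto intro: polytope_imp_polyhedron translate_polytope)
  ultimately show ?thesis
    by (simp add: polytope_eq_bounded_polyhedron)
qed

lemma minkowski_summandI:
  fixes K :: "(real ^ 'n) set"
  assumes K: "polytope K" and Q: "Q = convex hull S" "finite S" "S \<noteq> {}"
    and fits: "\<And>p. p \<in> K \<Longrightarrow> \<exists>q0\<in>Q. \<forall>q\<in>Q. p + t *\<^sub>R (q - q0) \<in> K"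
  shows "minkowski_summand ((*\<^sub>R) t ` Q) K"
proof -
  define C where "C = {x. \<forall>q\<in>Q. x + t *\<^sub>R q \<in> K}"
  have "polytope C"
    unfolding C_def Q(1) using K Q(2,3) by (rule polytope_translations_into)
  moreover have "K \<subseteq> minkowski_sum ((*\<^sub>R) t ` Q) C"
  proof
    fix p assume "p \<in> K"
    then obtain q0 where q0: "q0 \<in> Q" "\<forall>q\<in>Q. p + t *\<^sub>R (q - q0) \<in> K"
      using fits by blast
    then have "p - t *\<^sub>R q0 \<in> C"
      by (auto simp: C_def algebra_simps)
    then show "p \<in> minkowski_sum ((*\<^sub>R) t ` Q) C"
      using q0 by (force simp: minkowski_sum_def)
  qed
  moreover have "minkowski_sum ((*\<^sub>R) t ` Q) C \<subseteq> K"
    by (auto simp: minkowski_sum_def C_def add.commute)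
  ultimately show ?thesis
    unfolding minkowski_summand_def by blast
qed

lemma extreme_point_of_minkowski_sum_dilate:
  fixes Q C :: "(real ^ 'n) set"
  assumes vertex: "x extreme_point_of minkowski_sum ((*\<^sub>R) t ` Q) C" and t: "t \<noteq> 0"
  obtains q c where "q extreme_point_of Q" "c \<in> C" "x = t *\<^sub>R q + c"
proof -
  obtain q c where q: "q \<in> Q" and c: "c \<in> C" and x: "x = t *\<^sub>R q + c"
    using vertex unfolding extreme_point_of_def minkowski_sum_def by blast
  then have "(t *\<^sub>R q) extreme_point_of (*\<^sub>R) t ` Q"
    using extreme_point_of_minkowski_sum[of "t *\<^sub>R q" c] vertex by auto
  then have "q extreme_point_of Q"
    using extreme_point_of_scaleR_image[OF t] by blast
  then show ?thesis
    using that c x by blast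
qed

lemma minkowski_sum_dilate_translate:
  fixes A Q :: "(real ^ 'n) set"
  assumes "x \<in> minkowski_sum A ((*\<^sub>R) t ` Q)"
  obtains q0 where "q0 \<in> Q" "\<And>q. q \<in> Q \<Longrightarrow> x + t *\<^sub>R (q - q0) \<in> minkowski_sum A ((*\<^sub>R) t ` Q)"
proof -
  obtain a q0 where a: "a \<in> A" and q0: "q0 \<in> Q" and x: "x = a + t *\<^sub>R q0"
    using assms unfolding minkowski_sum_def by blast
  have "x + t *\<^sub>R (q - q0) = a + t *\<^sub>R q" for q
    by (simp add: x algebra_simps)
  then show ?thesis
    using that q0 a unfolding minkowski_sum_def by blast
qed

subsection \<open>Newton polytopes\<close>

lemma lat_emb_in_newton: "k \<in> Poly_Mapping.keys f \<Longrightarrow> lat_emb k \<in> newton f"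
  unfolding newton_def by (simp add: hull_inc)

lemma compact_newton: "compact (newton f)"
  by (simp add: newton_def finite_imp_compact_convex_hull)

lemma convex_newton: "convex (newton f)"
  by (simp add: newton_def)

lemma polytope_newton: "polytope (newton f)"
  by (simp add: newton_def polytope_convex_hull)

lemma newton_eq_empty_iff: "newton f = {} \<longleftrightarrow> f = 0"
  by (simp add: newton_def)

lemma lattice_polytope_newton: "f \<noteq> 0 \<Longrightarrow> lattice_polytope (newton f)"
  unfolding lattice_polytope_def newton_def lattice_points_def
  by (intro exI[of _ "lat_emb ` Poly_Mapping.keys f"]) auto

lemma newton_1: "newton (1 :: 'n::finite laurent) = {0}"
  by (simp add: newton_def lat_emb_0)

lemma newton_mult_subset: "newton (h * k) \<subseteq> minkowski_sum (newton h) (newton k)"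
proof -
  have "lat_emb ` Poly_Mapping.keys (h * k) \<subseteq> minkowski_sum (newton h) (newton k)"
  proof
    fix x assume "x \<in> lat_emb ` Poly_Mapping.keys (h * k)"
    then obtain a b where "a \<in> Poly_Mapping.keys h" "b \<in> Poly_Mapping.keys k" "x = lat_emb (a + b)"
      using keys_mult by blast
    then show "x \<in> minkowski_sum (newton h) (newton k)"
      unfolding minkowski_sum_def by (auto simp: lat_emb_add intro: lat_emb_in_newton)
  qed
  then show ?thesis
    unfolding newton_def[of "h * k"]
    by (intro hull_minimal convex_minkowski_sum convex_newton)
qed

text \<open>At a vertex a + b of the Minkowski sum, the decomposition into exponents of h and k is
  unique: any other one would exhibit a + b as a proper midpoint.\<close>
lemma lookup_mult_at_vertex:
  fixes h k :: "'n::finite laurent"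
  assumes vertex: "lat_emb (a + b) extreme_point_of minkowski_sum (newton h) (newton k)"
    and a: "a \<in> Poly_Mapping.keys h" and b: "b \<in> Poly_Mapping.keys k"
  shows "Poly_Mapping.lookup (h * k) (a + b) = Poly_Mapping.lookup h a * Poly_Mapping.lookup k b"
proof -
  have only_a: "l = a" if l: "l \<in> Poly_Mapping.keys h" "a + b - l \<in> Poly_Mapping.keys k" for l
  proof -
    let ?x = "lat_emb l + lat_emb b" and ?y = "lat_emb a + lat_emb (a + b - l)"
    have "?x \<in> minkowski_sum (newton h) (newton k)" "?y \<in> minkowski_sum (newton h) (newton k)"
      using a b l lat_emb_in_newton unfolding minkowski_sum_def by blast+
    moreover have "lat_emb (a + b) = midpoint ?x ?y"
    proof -
      have "?x + ?y = 2 *\<^sub>R lat_emb (a + b)"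
        by (simp add: lat_emb_add lat_emb_diff scaleR_2)
      then show ?thesis
        by (simp add: midpoint_def)
    qed
    ultimately have "?x = ?y"
      using vertex midpoint_in_open_segment unfolding extreme_point_of_def by metis
    then have "lat_emb (l + b) = lat_emb (a + (a + b - l))"
      by (simp only: lat_emb_add)
    then have "l + b = a + (a + b - l)"
      by (simp only: inj_eq[OF inj_lat_emb])
    then show "l = a"
      unfolding vec_eq_iff by (simp add: algebra_simps)
  qed
  have "Poly_Mapping.lookup (h * k) (a + b)
      = (\<Sum>l. Poly_Mapping.lookup h l * Poly_Mapping.lookup k (a + b - l))"
  proof -
    have "(a + b = l + q) = (q = a + b - l)" for l q :: "int ^ 'n"
      by (auto simp: algebra_simps)
    then show ?thesis
      by (simp add: lookup_mult)
  qed
  also have "\<dots> = (\<Sum>l. Poly_Mapping.lookup h a * Poly_Mapping.lookup k b when l = a)"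
  proof (rule Sum_any.cong)
    fix l
    show "Poly_Mapping.lookup h l * Poly_Mapping.lookup k (a + b - l)
        = (Poly_Mapping.lookup h a * Poly_Mapping.lookup k b when l = a)"
      using only_a[of l] by (cases "l = a") (auto simp: in_keys_iff)
  qed
  finally show ?thesis
    by simp
qed

lemma newton_mult: "newton (h * k) = minkowski_sum (newton h) (newton k)"
proof
  let ?M = "minkowski_sum (newton h) (newton k)"
  have "{x. x extreme_point_of ?M} \<subseteq> newton (h * k)"
  proof
    fix x assume "x \<in> {x. x extreme_point_of ?M}"
    then have vertex: "x extreme_point_of ?M"
      by simp
    then obtain a b where ab: "a \<in> newton h" "b \<in> newton k" "x = a + b"
      unfolding extreme_point_of_def minkowski_sum_def by blast
    then have "a extreme_point_of newton h" "b extreme_point_of newton k"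
      using extreme_point_of_minkowski_sum[of a b] extreme_point_of_minkowski_sum[of b a]
        vertex by (simp_all add: minkowski_sum_commute add.commute)
    then obtain a' b' where a': "a' \<in> Poly_Mapping.keys h" "a = lat_emb a'"
      and b': "b' \<in> Poly_Mapping.keys k" "b = lat_emb b'"
      unfolding newton_def by (blast dest: extreme_point_of_convex_hull)
    have "Poly_Mapping.lookup (h * k) (a' + b') \<noteq> 0"
      using lookup_mult_at_vertex[of a' b' h k] vertex a' b' ab(3)
      by (simp add: lat_emb_add in_keys_iff)
    then have "lat_emb (a' + b') \<in> newton (h * k)"
      by (simp add: lat_emb_in_newton in_keys_iff)
    then show "x \<in> newton (h * k)"
      using a' b' ab(3) by (simp add: lat_emb_add)
  qed
  then have "convex hull {x. x extreme_point_of ?M} \<subseteq> newton (h * k)"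
    by (intro hull_minimal convex_newton)
  then show "?M \<subseteq> newton (h * k)"
    using Krein_Milman_Minkowski[of ?M]
    by (simp add: compact_minkowski_sum convex_minkowski_sum compact_newton convex_newton)
qed (rule newton_mult_subset)

lemma newton_power:
  assumes "g \<noteq> 0"
  shows "newton (g ^ n) = (*\<^sub>R) (real n) ` newton g"
proof (induction n)
  case 0
  then show ?case
    using assms by (simp add: newton_1 newton_eq_empty_iff image_constant_conv)
next
  case (Suc n)
  then show ?case
    using minkowski_sum_dilates[OF convex_newton, of 1 "real n" g]
    by (simp add: newton_mult add.commute)
qed

lemma lookup_power_at_vertex:
  assumes g: "normalized g" and q: "lat_emb q extreme_point_of newton g"
  shows "Poly_Mapping.lookup (g ^ n) (int n *s q) = 1"
proof (induction n)
  case 0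
  then show ?case
    by (simp add: lookup_one vec_eq_iff)
next
  case (Suc n)
  have gq: "Poly_Mapping.lookup g q = 1"
    using g q unfolding normalized_def by blast
  then have "g \<noteq> 0"
    by auto
  have scale: "lat_emb (q + int n *s q) = real (Suc n) *\<^sub>R lat_emb q"
    by (simp add: lat_emb_add lat_emb_vector_scalar_mult algebra_simps)
  have sum: "minkowski_sum (newton g) (newton (g ^ n)) = (*\<^sub>R) (real (Suc n)) ` newton g"
    using newton_power[OF \<open>g \<noteq> 0\<close>, of "Suc n"] by (simp add: newton_mult)
  have "lat_emb (q + int n *s q) extreme_point_of minkowski_sum (newton g) (newton (g ^ n))"
    unfolding scale sum by (rule iffD2[OF extreme_point_of_scaleR_image q]) simp
  then have "Poly_Mapping.lookup (g * g ^ n) (q + int n *s q) = 1"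
    using lookup_mult_at_vertex[of q "int n *s q" g "g ^ n"] gq Suc
    by (simp add: in_keys_iff)
  moreover have "int (Suc n) *s q = q + int n *s q"
    by (simp add: vec_eq_iff algebra_simps)
  ultimately show ?case
    by (simp only: power_Suc)
qed

subsection \<open>Level sets of the affine function\<close>

definition level_of :: "(int ^ 'n) \<times> int \<Rightarrow> int ^ 'n \<Rightarrow> int" where
  "level_of m k = (\<Sum>i\<in>UNIV. fst m $ i * k $ i) + snd m"

lemma phi_lat_emb: "phi m (lat_emb k) = real_of_int (level_of m k)"
  by (simp add: phi_def pairM_def level_of_def lat_emb_def)

lemma lat_emb_in_level_iff: "lat_emb k \<in> level m i \<longleftrightarrow> i = level_of m k"
  by (auto simp: level_def phi_lat_emb)

definition real_dual :: "(int ^ 'n) \<times> int \<Rightarrow> real ^ 'n" where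
  "real_dual m = (\<chi> j. real_of_int (fst m $ j))"

lemma pairM_eq_inner: "pairM m x = real_dual m \<bullet> x"
  by (simp add: pairM_def real_dual_def inner_vec_def)

lemma level_eq_hyperplane:
  "level m i = {x. real_dual m \<bullet> x = real_of_int i - real_of_int (snd m)}"
  by (auto simp: level_def phi_def pairM_eq_inner)

lemma polyhedron_level: "polyhedron (level m i)"
  by (simp add: level_eq_hyperplane polyhedron_hyperplane)

lemma convex_level: "convex (level m i)"
  by (simp add: level_eq_hyperplane convex_hyperplane)

lemma subspace_hyp0: "subspace (hyp0 m)"
  by (simp add: hyp0_def pairM_eq_inner subspace_hyperplane)

lemma phi_add_hyp0: "y \<in> hyp0 m \<Longrightarrow> phi m (x + y) = phi m x"
  by (simp add: hyp0_def phi_def pairM_eq_inner inner_add_right)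

lemma convex_on_phi: "convex_on UNIV (phi m)"
proof -
  have "phi m (u *\<^sub>R x + v *\<^sub>R y) = u * phi m x + v * phi m y" if "u + v = 1" for u v x y
  proof -
    have "phi m (u *\<^sub>R x + v *\<^sub>R y) = u * pairM m x + v * pairM m y + (u + v) * snd m"
      using that by (simp add: phi_def pairM_eq_inner inner_add_right)
    then show ?thesis
      by (simp add: phi_def algebra_simps)
  qed
  then show ?thesis
    by (simp add: convex_on_def)
qed

lemma lookup_sum_levels:
  assumes levels: "\<And>i. lat_emb ` Poly_Mapping.keys (fi i) \<subseteq> level m i"
    and fin: "finite {i. fi i \<noteq> 0}"
  shows "Poly_Mapping.lookup (\<Sum>i\<in>{i. fi i \<noteq> 0}. fi i) k
      = Poly_Mapping.lookup (fi (level_of m k)) k"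
proof -
  have off_level: "Poly_Mapping.lookup (fi i) k = 0" if "i \<noteq> level_of m k" for i
    using levels[of i] that by (force simp: in_keys_iff lat_emb_in_level_iff)
  have "Poly_Mapping.lookup (\<Sum>i\<in>{i. fi i \<noteq> 0}. fi i) k
      = (\<Sum>i\<in>{i. fi i \<noteq> 0}. if i = level_of m k then Poly_Mapping.lookup (fi i) k else 0)"
    by (auto simp: lookup_sum off_level intro: sum.cong)
  also have "\<dots> = Poly_Mapping.lookup (fi (level_of m k)) k"
    using fin by (auto simp: sum.delta)
  finally show ?thesis .
qed

lemma newton_level_component_subset:
  assumes levels: "\<And>i. lat_emb ` Poly_Mapping.keys (fi i) \<subseteq> level m i"
    and fin: "finite {i. fi i \<noteq> 0}"
  shows "newton (fi j) \<subseteq> newton (\<Sum>i\<in>{i. fi i \<noteq> 0}. fi i)"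
proof -
  have "Poly_Mapping.keys (fi j) \<subseteq> Poly_Mapping.keys (\<Sum>i\<in>{i. fi i \<noteq> 0}. fi i)"
  proof
    fix k assume k: "k \<in> Poly_Mapping.keys (fi j)"
    then have "j = level_of m k"
      using levels[of j] by (auto simp: lat_emb_in_level_iff)
    then show "k \<in> Poly_Mapping.keys (\<Sum>i\<in>{i. fi i \<noteq> 0}. fi i)"
      using k by (simp add: in_keys_iff lookup_sum_levels[OF levels fin])
  qed
  then show ?thesis
    unfolding newton_def by (intro hull_mono image_mono)
qed

subsection \<open>Mutable polynomials give deformation pairs\<close>

lemma convex_cone_combination:
  assumes "convex Q" "q1 \<in> Q" "q2 \<in> Q" "0 \<le> a" "0 \<le> b"
  obtains q where "q \<in> Q" "(a + b) *\<^sub>R q = a *\<^sub>R q1 + b *\<^sub>R q2"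
proof (cases "a + b = 0")
  case True
  with assms have "a = 0" "b = 0"
    by auto
  with that show ?thesis
    using assms(2) by simp
next
  case False
  define q where "q = (a / (a + b)) *\<^sub>R q1 + (b / (a + b)) *\<^sub>R q2"
  have "q \<in> Q"
    unfolding q_def using assms False
    by (intro convexD) (auto simp: add_divide_distrib [symmetric])
  moreover have "(a + b) *\<^sub>R q = a *\<^sub>R q1 + b *\<^sub>R q2"
    using False by (simp add: q_def scaleR_add_right)
  ultimately show ?thesis
    using that by blast
qed

text \<open>Convexity of this set is what propagates the summand property from the monomials of a
  mutable polynomial to its whole Newton polytope.\<close>
definition dilate_room :: "'a::real_vector set \<Rightarrow> 'a set \<Rightarrow> ('a \<Rightarrow> real) \<Rightarrow> 'a set" where
  "dilate_room P Q \<phi> = {p. \<exists>q0\<in>Q. \<exists>s\<ge>0. \<phi> p \<le> s \<and> (\<forall>q\<in>Q. p + s *\<^sub>R (q - q0) \<in> P)}"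

lemma dilate_roomI:
  assumes "q0 \<in> Q" "0 \<le> s" "\<phi> p \<le> s" "\<And>q. q \<in> Q \<Longrightarrow> p + s *\<^sub>R (q - q0) \<in> P"
  shows "p \<in> dilate_room P Q \<phi>"
  using assms unfolding dilate_room_def by blast

lemma convex_dilate_room:
  assumes P: "convex P" and Q: "convex Q" and \<phi>: "convex_on UNIV \<phi>"
  shows "convex (dilate_room P Q \<phi>)"
proof (rule convexI)
  fix x y and u v :: real
  assume "x \<in> dilate_room P Q \<phi>" "y \<in> dilate_room P Q \<phi>" and uv: "0 \<le> u" "0 \<le> v" "u + v = 1"
  then obtain q1 s1 q2 s2
    where x: "q1 \<in> Q" "0 \<le> s1" "\<phi> x \<le> s1" "\<forall>q\<in>Q. x + s1 *\<^sub>R (q - q1) \<in> P"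
      and y: "q2 \<in> Q" "0 \<le> s2" "\<phi> y \<le> s2" "\<forall>q\<in>Q. y + s2 *\<^sub>R (q - q2) \<in> P"
    unfolding dilate_room_def by blast
  let ?s = "u * s1 + v * s2"
  obtain q0 where q0: "q0 \<in> Q" "?s *\<^sub>R q0 = (u * s1) *\<^sub>R q1 + (v * s2) *\<^sub>R q2"
    using convex_cone_combination[OF Q x(1) y(1), of "u * s1" "v * s2"] x(2) y(2) uv by auto
  have "\<phi> (u *\<^sub>R x + v *\<^sub>R y) \<le> u * \<phi> x + v * \<phi> y"
    using \<phi> uv unfolding convex_on_def by blast
  also have "\<dots> \<le> ?s"
    using x(3) y(3) uv by (intro add_mono mult_left_mono) auto
  finally have "\<phi> (u *\<^sub>R x + v *\<^sub>R y) \<le> ?s" .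
  moreover have "u *\<^sub>R x + v *\<^sub>R y + ?s *\<^sub>R (q - q0) \<in> P" if "q \<in> Q" for q
  proof -
    have "?s *\<^sub>R (q - q0) = ?s *\<^sub>R q - ((u * s1) *\<^sub>R q1 + (v * s2) *\<^sub>R q2)"
      by (simp only: scaleR_diff_right q0(2))
    then have "u *\<^sub>R x + v *\<^sub>R y + ?s *\<^sub>R (q - q0)
        = u *\<^sub>R (x + s1 *\<^sub>R (q - q1)) + v *\<^sub>R (y + s2 *\<^sub>R (q - q2))"
      by (simp add: algebra_simps)
    then show ?thesis
      using x(4) y(4) that uv by (auto intro!: convexD[OF P])
  qed
  ultimately show "u *\<^sub>R x + v *\<^sub>R y \<in> dilate_room P Q \<phi>"
    using q0(1) x(2) y(2) uv by (intro dilate_roomI) auto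
qed

lemma shrink_translated_dilate:
  assumes Q: "convex Q" and q0: "q0 \<in> Q" and t: "0 \<le> t" "t \<le> s"
    and fits: "\<forall>q\<in>Q. p + s *\<^sub>R (q - q0) \<in> P" and q: "q \<in> Q"
  shows "p + t *\<^sub>R (q - q0) \<in> P"
proof (cases "s = 0")
  case True
  then show ?thesis
    using t fits q0 by force
next
  case False
  define q' where "q' = (1 - t / s) *\<^sub>R q0 + (t / s) *\<^sub>R q"
  have "q' \<in> Q"
    unfolding q'_def using Q q0 q t False by (intro convexD) (auto simp: field_simps)
  moreover have "s *\<^sub>R (q' - q0) = t *\<^sub>R (q - q0)"
    using False by (simp add: q'_def algebra_simps)
  ultimately show ?thesis
    using fits by metis
qed

lemma newton_subset_dilate_room:
  assumes g: "g \<noteq> 0" and mutable: "mutable f m g"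
  shows "newton f \<subseteq> dilate_room (newton f) (newton g) (phi m)"
proof -
  obtain fi where levels: "\<And>i. lat_emb ` Poly_Mapping.keys (fi i) \<subseteq> level m i"
    and fin: "finite {i. fi i \<noteq> 0}" and f: "f = (\<Sum>i\<in>{i. fi i \<noteq> 0}. fi i)"
    and pieces: "\<And>n::nat. \<exists>h. fi (int n) = h * g ^ n"
    using mutable unfolding mutable_def by blast
  let ?Q = "newton g"
  have "lat_emb k \<in> dilate_room (newton f) ?Q (phi m)" if k: "k \<in> Poly_Mapping.keys f" for k
  proof -
    let ?i = "level_of m k"
    have "k \<in> Poly_Mapping.keys (fi ?i)"
      using k by (simp add: f in_keys_iff lookup_sum_levels[OF levels fin])
    then have in_piece: "lat_emb k \<in> newton (fi ?i)"
      by (rule lat_emb_in_newton)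
    have piece_in_f: "newton (fi ?i) \<subseteq> newton f"
      unfolding f by (rule newton_level_component_subset[OF levels fin])
    show ?thesis
    proof (cases "?i < 0")
      case True
      obtain q0 where "q0 \<in> ?Q"
        using g newton_eq_empty_iff by blast
      then show ?thesis
        using in_piece piece_in_f True by (intro dilate_roomI[where s=0]) (auto simp: phi_lat_emb)
    next
      case False
      then obtain n h where n: "?i = int n" and h: "fi ?i = h * g ^ n"
        using pieces by (metis nonneg_int_cases not_less)
      then have "lat_emb k \<in> minkowski_sum (newton h) ((*\<^sub>R) (real n) ` ?Q)"
        using in_piece by (simp add: newton_mult newton_power[OF g])
      then obtain q0 where q0: "q0 \<in> ?Q"
        and "\<And>q. q \<in> ?Q \<Longrightarrow> lat_emb k + real n *\<^sub>R (q - q0) \<in> newton (fi ?i)"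
        using h by (auto simp: newton_mult newton_power[OF g] elim: minkowski_sum_dilate_translate)
      then show ?thesis
        using piece_in_f n by (intro dilate_roomI[OF q0, where s="real n"]) (auto simp: phi_lat_emb)
    qed
  qed
  then show ?thesis
    unfolding newton_def[of f]
    by (intro hull_minimal convex_dilate_room convex_on_phi) (auto simp: convex_newton simp flip: newton_def)
qed

lemma deformation_pair_if_mutable:
  assumes g: "g \<noteq> 0" and Q_hyp0: "newton g \<subseteq> hyp0 m" and mutable: "mutable f m g"
  shows "deformation_pair (newton f) m (newton g)"
proof -
  let ?P = "newton f" and ?Q = "newton g"
  have "minkowski_summand ((*\<^sub>R) (real t) ` ?Q) (?P \<inter> level m (int t))" for t :: nat
  proof (rule minkowski_summandI)
    show "polytope (?P \<inter> level m (int t))"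
      by (simp add: polytope_newton polytope_Int_polyhedron polyhedron_level)
    show "?Q = convex hull (lat_emb ` Poly_Mapping.keys g)" "finite (lat_emb ` Poly_Mapping.keys g)"
      "lat_emb ` Poly_Mapping.keys g \<noteq> {}"
      using g by (simp_all add: newton_def)
    fix p assume p: "p \<in> ?P \<inter> level m (int t)"
    then obtain q0 s where q0: "q0 \<in> ?Q" and s: "0 \<le> s" "phi m p \<le> s"
      and fits: "\<forall>q\<in>?Q. p + s *\<^sub>R (q - q0) \<in> ?P"
      using newton_subset_dilate_room[OF g mutable] unfolding dilate_room_def by blast
    have phi_p: "phi m p = real t"
      using p by (simp add: level_def)
    have "p + real t *\<^sub>R (q - q0) \<in> ?P \<inter> level m (int t)" if q: "q \<in> ?Q" for q
    proof
      show "p + real t *\<^sub>R (q - q0) \<in> ?P"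
        using shrink_translated_dilate[OF convex_newton q0 _ _ fits q] s phi_p by simp
      have "real t *\<^sub>R (q - q0) \<in> hyp0 m"
        using Q_hyp0 q q0 by (blast intro: subspace_scale subspace_diff subspace_hyp0)
      then show "p + real t *\<^sub>R (q - q0) \<in> level m (int t)"
        using p by (simp add: level_def phi_add_hyp0)
    qed
    then show "\<exists>q0\<in>?Q. \<forall>q\<in>?Q. p + real t *\<^sub>R (q - q0) \<in> ?P \<inter> level m (int t)"
      using q0 by blast
  qed
  then show ?thesis
    unfolding deformation_pair_def using lattice_polytope_newton[OF g] Q_hyp0 by blast
qed

subsection \<open>Deformation pairs give mutable polynomials\<close>

definition lattice_vertices :: "(real ^ 'n) set \<Rightarrow> (int ^ 'n) set" where
  "lattice_vertices P = {v. lat_emb v extreme_point_of P}"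

lemma lattice_polytope_vertices:
  assumes "lattice_polytope P"
  shows "finite (lattice_vertices P)" and "P = convex hull (lat_emb ` lattice_vertices P)"
proof -
  obtain S where S: "finite S" "S \<subseteq> lattice_points" "P = convex hull S"
    using assms unfolding lattice_polytope_def by blast
  have "lattice_vertices P \<subseteq> lat_emb -` S"
    using S(3) by (auto simp: lattice_vertices_def dest: extreme_point_of_convex_hull)
  then show "finite (lattice_vertices P)"
    using finite_vimageI[OF S(1) inj_lat_emb] by (rule finite_subset)
  have "{x. x extreme_point_of P} \<subseteq> lat_emb ` lattice_vertices P"
  proof
    fix x assume "x \<in> {x. x extreme_point_of P}"
    then have "x extreme_point_of P" "x \<in> S"
      using S(3) extreme_point_of_convex_hull by auto
    then show "x \<in> lat_emb ` lattice_vertices P"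
      using S(2) unfolding lattice_points_def lattice_vertices_def by auto
  qed
  then have "lat_emb ` lattice_vertices P = {x. x extreme_point_of P}"
    by (auto simp: lattice_vertices_def)
  then show "P = convex hull (lat_emb ` lattice_vertices P)"
    using Krein_Milman_Minkowski[of P] S by (simp add: finite_imp_compact_convex_hull)
qed

definition monomial_sum :: "(int ^ 'n) set \<Rightarrow> 'n laurent" where
  "monomial_sum A = Abs_poly_mapping (\<lambda>k. if k \<in> A then 1 else 0)"

lemma lookup_monomial_sum:
  "finite A \<Longrightarrow> Poly_Mapping.lookup (monomial_sum A) k = (if k \<in> A then 1 else 0)"
proof -
  assume "finite A"
  moreover have "{k. (if k \<in> A then 1 else 0 :: complex) \<noteq> 0} = A"
    by auto
  ultimately show ?thesis
    unfolding monomial_sum_def by (simp add: lookup_Abs_poly_mapping)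
qed

lemma keys_monomial_sum: "finite A \<Longrightarrow> Poly_Mapping.keys (monomial_sum A) = A"
  by (auto simp: in_keys_iff lookup_monomial_sum split: if_splits)

lemma monomial_sum_empty: "monomial_sum {} = 0"
  using keys_monomial_sum[of "{}"] by simp

lemma monomial_sum_vertices:
  assumes "lattice_polytope P"
  shows "newton (monomial_sum (lattice_vertices P)) = P"
    and "normalized (monomial_sum (lattice_vertices P))"
proof -
  show newton: "newton (monomial_sum (lattice_vertices P)) = P"
    using lattice_polytope_vertices[OF assms]
    by (simp add: newton_def keys_monomial_sum)
  show "normalized (monomial_sum (lattice_vertices P))"
    using lattice_polytope_vertices(1)[OF assms] unfolding normalized_def newton
    by (simp add: lookup_monomial_sum lattice_vertices_def)
qed

lemma deformation_pair_vertex_split: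
  assumes dp: "deformation_pair P m Q" and v: "v \<in> lattice_vertices P"
  defines "n \<equiv> nat (level_of m v)"
  obtains q where "q \<in> lattice_vertices Q"
    and "\<And>y. y \<in> Q \<Longrightarrow> lat_emb (v - int n *s q) + real n *\<^sub>R y \<in> P \<inter> level m (level_of m v)"
proof -
  have Q: "lattice_polytope Q"
    using dp by (simp add: deformation_pair_def)
  have v_slice: "lat_emb v \<in> P \<inter> level m (level_of m v)"
    using v by (auto simp: lattice_vertices_def extreme_point_of_def lat_emb_in_level_iff)
  show ?thesis
  proof (cases "n = 0")
    case True
    have "lattice_vertices Q \<noteq> {}"
      using lattice_polytope_vertices(2)[OF Q] Q by (auto simp: lattice_polytope_def)
    then show ?thesis
      using that v_slice True by (auto simp: vec_eq_iff)
  next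
    case False
    then have n: "level_of m v = int n"
      by (simp add: n_def)
    then obtain C where C: "P \<inter> level m (level_of m v) = minkowski_sum ((*\<^sub>R) (real n) ` Q) C"
      using dp v_slice unfolding deformation_pair_def minkowski_summand_def by force
    have "lat_emb v extreme_point_of minkowski_sum ((*\<^sub>R) (real n) ` Q) C"
      using v v_slice unfolding C [symmetric] by (auto simp: lattice_vertices_def extreme_point_of_def)
    then obtain q' c where q': "q' extreme_point_of Q" and c: "c \<in> C"
      and v_eq: "lat_emb v = real n *\<^sub>R q' + c"
      using False by (auto elim: extreme_point_of_minkowski_sum_dilate)
    then obtain q where q: "q \<in> lattice_vertices Q" "q' = lat_emb q"
      using lattice_polytope_vertices(2)[OF Q] extreme_point_of_convex_hull by (metis imageE)
    have "lat_emb (v - int n *s q) = c"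
      using v_eq q(2) by (simp add: lat_emb_diff lat_emb_vector_scalar_mult)
    then have "lat_emb (v - int n *s q) + real n *\<^sub>R y \<in> P \<inter> level m (level_of m v)" if "y \<in> Q" for y
      using C c that unfolding minkowski_sum_def by (force simp: add.commute)
    then show ?thesis
      using that q(1) by blast
  qed
qed

lemma newton_mult_power_subset:
  assumes K: "convex K" and g: "g \<noteq> 0"
    and fits: "\<And>a y. a \<in> Poly_Mapping.keys h \<Longrightarrow> y \<in> newton g \<Longrightarrow> lat_emb a + real n *\<^sub>R y \<in> K"
  shows "newton (h * g ^ n) \<subseteq> K"
proof
  fix z assume "z \<in> newton (h * g ^ n)"
  then obtain x y where x: "x \<in> newton h" and y: "y \<in> newton g" and z: "z = x + real n *\<^sub>R y"
    by (auto simp: newton_mult newton_power[OF g] minkowski_sum_def)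
  have "{x. x + real n *\<^sub>R y \<in> K} = (\<lambda>x. x - real n *\<^sub>R y) ` K"
    by (auto intro: image_eqI[where x="_ + real n *\<^sub>R y"])
  then have "convex {x. x + real n *\<^sub>R y \<in> K}"
    using K by (simp add: convex_translation_subtract)
  moreover have "lat_emb ` Poly_Mapping.keys h \<subseteq> {x. x + real n *\<^sub>R y \<in> K}"
    using fits y by blast
  ultimately have "newton h \<subseteq> {x. x + real n *\<^sub>R y \<in> K}"
    unfolding newton_def by (rule hull_minimal[rotated])
  then show "z \<in> K"
    using x z by blast
qed

lemma lookup_mult_power_at_vertex:
  assumes g: "normalized g" and q: "lat_emb q extreme_point_of newton g"
    and a: "Poly_Mapping.lookup h a = 1"
    and vertex: "lat_emb (a + int n *s q) extreme_point_of K" and sub: "newton (h * g ^ n) \<subseteq> K"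
  shows "Poly_Mapping.lookup (h * g ^ n) (a + int n *s q) = 1"
proof -
  have power: "Poly_Mapping.lookup (g ^ n) (int n *s q) = 1"
    by (rule lookup_power_at_vertex[OF g q])
  then have keys: "a \<in> Poly_Mapping.keys h" "int n *s q \<in> Poly_Mapping.keys (g ^ n)"
    using a by (simp_all add: in_keys_iff)
  then have "lat_emb (a + int n *s q) \<in> newton (h * g ^ n)"
    by (simp add: newton_mult minkowski_sum_def lat_emb_add) (blast intro: lat_emb_in_newton)
  then have "lat_emb (a + int n *s q) extreme_point_of minkowski_sum (newton h) (newton (g ^ n))"
    using vertex sub unfolding newton_mult extreme_point_of_def by blast
  then show ?thesis
    using lookup_mult_at_vertex[OF _ keys] a power by simp
qed

lemma newton_sum_levels:
  assumes P: "lattice_polytope P"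
    and pieces: "\<And>i. lat_emb ` Poly_Mapping.keys (fi i) \<subseteq> P \<inter> level m i"
    and fin: "finite {i. fi i \<noteq> 0}"
    and vertices: "\<And>v. v \<in> lattice_vertices P \<Longrightarrow> Poly_Mapping.lookup (fi (level_of m v)) v = 1"
  shows "newton (\<Sum>i\<in>{i. fi i \<noteq> 0}. fi i) = P" and "normalized (\<Sum>i\<in>{i. fi i \<noteq> 0}. fi i)"
proof -
  let ?f = "\<Sum>i\<in>{i. fi i \<noteq> 0}. fi i"
  have levels: "\<And>i. lat_emb ` Poly_Mapping.keys (fi i) \<subseteq> level m i"
    using pieces by blast
  have vertex_coeff: "Poly_Mapping.lookup ?f v = 1" if "v \<in> lattice_vertices P" for v
    using lookup_sum_levels[OF levels fin] vertices that by simp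
  have "lat_emb ` Poly_Mapping.keys ?f \<subseteq> P"
    using keys_sum[of fi "{i. fi i \<noteq> 0}"] pieces by blast
  then have "newton ?f \<subseteq> P"
    unfolding newton_def using P lattice_polytope_vertices(2)
    by (metis convex_convex_hull hull_minimal)
  moreover have "lattice_vertices P \<subseteq> Poly_Mapping.keys ?f"
    using vertex_coeff by (auto simp: in_keys_iff)
  then have "P \<subseteq> newton ?f"
    unfolding newton_def using lattice_polytope_vertices(2)[OF P] by (metis hull_mono image_mono)
  ultimately show newton: "newton ?f = P"
    by blast
  show "normalized ?f"
    using vertex_coeff unfolding normalized_def newton lattice_vertices_def by blast
qed

definition shifted_vertices ::
    "(int ^ 'n \<Rightarrow> int ^ 'n) \<Rightarrow> (int ^ 'n) \<times> int \<Rightarrow> (real ^ 'n::finite) set \<Rightarrow> int \<Rightarrow> (int ^ 'n) set"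
  where "shifted_vertices qv m P i =
    (\<lambda>v. v - int (nat i) *s qv v) ` {v \<in> lattice_vertices P. level_of m v = i}"

text \<open>At negative heights nat i = 0, so the piece there is just the sum of the monomials at the
  vertices of P.\<close>
definition vertex_piece ::
    "'n laurent \<Rightarrow> (int ^ 'n \<Rightarrow> int ^ 'n) \<Rightarrow> (int ^ 'n) \<times> int \<Rightarrow> (real ^ 'n::finite) set \<Rightarrow> int
      \<Rightarrow> 'n laurent"
  where "vertex_piece g qv m P i = monomial_sum (shifted_vertices qv m P i) * g ^ nat i"

lemma finite_shifted_vertices:
  "lattice_polytope P \<Longrightarrow> finite (shifted_vertices qv m P i)"
  by (simp add: shifted_vertices_def lattice_polytope_vertices(1))

lemma finite_vertex_pieces:
  assumes "lattice_polytope P"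
  shows "finite {i. vertex_piece g qv m P i \<noteq> 0}"
proof (rule finite_subset)
  show "{i. vertex_piece g qv m P i \<noteq> 0} \<subseteq> level_of m ` lattice_vertices P"
  proof
    fix i assume "i \<in> {i. vertex_piece g qv m P i \<noteq> 0}"
    then have "shifted_vertices qv m P i \<noteq> {}"
      by (auto simp: vertex_piece_def monomial_sum_empty)
    then show "i \<in> level_of m ` lattice_vertices P"
      by (auto simp: shifted_vertices_def)
  qed
  show "finite (level_of m ` lattice_vertices P)"
    using lattice_polytope_vertices(1)[OF assms] by simp
qed

lemma newton_vertex_piece_subset:
  assumes P: "lattice_polytope P" and g: "g \<noteq> 0"
    and shift: "\<And>v y. v \<in> lattice_vertices P \<Longrightarrow> level_of m v = i \<Longrightarrow> y \<in> newton g \<Longrightarrow>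
      lat_emb (v - int (nat i) *s qv v) + real (nat i) *\<^sub>R y \<in> P \<inter> level m i"
  shows "newton (vertex_piece g qv m P i) \<subseteq> P \<inter> level m i"
  unfolding vertex_piece_def
proof (rule newton_mult_power_subset[OF _ g])
  show "convex (P \<inter> level m i)"
    using lattice_polytope_vertices(2)[OF P] by (metis convex_convex_hull convex_Int convex_level)
  fix a y assume a: "a \<in> Poly_Mapping.keys (monomial_sum (shifted_vertices qv m P i))"
    and y: "y \<in> newton g"
  then have "a \<in> shifted_vertices qv m P i"
    by (simp add: keys_monomial_sum[OF finite_shifted_vertices[OF P]])
  then show "lat_emb a + real (nat i) *\<^sub>R y \<in> P \<inter> level m i"
    unfolding shifted_vertices_def using shift y by blast
qed

lemma lookup_vertex_piece:
  assumes P: "lattice_polytope P" and g: "normalized g" and v: "v \<in> lattice_vertices P"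
    and q: "lat_emb (qv v) extreme_point_of newton g"
    and sub: "newton (vertex_piece g qv m P (level_of m v)) \<subseteq> P"
  shows "Poly_Mapping.lookup (vertex_piece g qv m P (level_of m v)) v = 1"
proof -
  let ?i = "level_of m v"
  let ?a = "v - int (nat ?i) *s qv v"
  have "?a \<in> shifted_vertices qv m P ?i"
    unfolding shifted_vertices_def using v by blast
  then have a: "Poly_Mapping.lookup (monomial_sum (shifted_vertices qv m P ?i)) ?a = 1"
    by (simp add: lookup_monomial_sum[OF finite_shifted_vertices[OF P]])
  have vertex: "lat_emb (?a + int (nat ?i) *s qv v) extreme_point_of P"
    using v by (simp add: lattice_vertices_def)
  have "Poly_Mapping.lookup (vertex_piece g qv m P ?i) (?a + int (nat ?i) *s qv v) = 1"
    unfolding vertex_piece_def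
    by (rule lookup_mult_power_at_vertex[OF g q a vertex]) (use sub in \<open>simp add: vertex_piece_def\<close>)
  then show ?thesis
    by simp
qed

lemma mutable_if_deformation_pair:
  fixes P Q :: "(real ^ 'n::finite) set"
  assumes P: "lattice_polytope P" and dp: "deformation_pair P m Q"
  obtains f g :: "'n laurent"
  where "normalized f" "normalized g" "newton f = P" "newton g = Q" "mutable f m g"
proof -
  have Q: "lattice_polytope Q"
    using dp by (simp add: deformation_pair_def)
  define g :: "'n laurent" where "g = monomial_sum (lattice_vertices Q)"
  have g: "newton g = Q" "normalized g"
    unfolding g_def using monomial_sum_vertices[OF Q] by auto
  moreover have "Q \<noteq> {}"
    using Q by (auto simp: lattice_polytope_def)
  ultimately have "g \<noteq> 0"
    by (metis newton_eq_empty_iff)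
  have "\<forall>v\<in>lattice_vertices P. \<exists>q. q \<in> lattice_vertices Q \<and> (\<forall>y\<in>Q.
      lat_emb (v - int (nat (level_of m v)) *s q) + real (nat (level_of m v)) *\<^sub>R y
        \<in> P \<inter> level m (level_of m v))"
    using deformation_pair_vertex_split[OF dp] by metis
  then obtain qv where qv: "\<And>v. v \<in> lattice_vertices P \<Longrightarrow> qv v \<in> lattice_vertices Q"
    and shift: "\<And>v y. v \<in> lattice_vertices P \<Longrightarrow> y \<in> Q \<Longrightarrow>
      lat_emb (v - int (nat (level_of m v)) *s qv v) + real (nat (level_of m v)) *\<^sub>R y
        \<in> P \<inter> level m (level_of m v)"
    by metis
  let ?fi = "vertex_piece g qv m P"
  have newton_pieces: "newton (?fi i) \<subseteq> P \<inter> level m i" for i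
    by (rule newton_vertex_piece_subset[OF P \<open>g \<noteq> 0\<close>]) (use shift g(1) in blast)
  then have pieces: "lat_emb ` Poly_Mapping.keys (?fi i) \<subseteq> P \<inter> level m i" for i
    using lat_emb_in_newton by blast
  have vertex_coeff: "Poly_Mapping.lookup (?fi (level_of m v)) v = 1" if "v \<in> lattice_vertices P" for v
    using lookup_vertex_piece[OF P g(2) that] qv[OF that] newton_pieces g(1)
    by (auto simp: lattice_vertices_def)
  define f where "f = (\<Sum>i\<in>{i. ?fi i \<noteq> 0}. ?fi i)"
  have f: "newton f = P" "normalized f"
    unfolding f_def using newton_sum_levels[OF P pieces finite_vertex_pieces[OF P] vertex_coeff] by auto
  have "mutable f m g"
    unfolding mutable_def f_def using pieces finite_vertex_pieces[OF P]
    by (intro exI[of _ ?fi]) (auto simp: vertex_piece_def)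
  then show thesis
    using that f g by blast
qed

theorem lemma2p7:
  fixes dummy :: "'n::finite itself"
  shows "(\<forall>(P :: (real ^ 'n) set) m Q. lattice_polytope P \<and> deformation_pair P m Q \<longrightarrow>
            (\<exists>f g :: 'n laurent. normalized f \<and> normalized g \<and>
               newton f = P \<and> newton g = Q \<and> mutable f m g))
       \<and> (\<forall>(f :: 'n laurent) g m. normalized f \<and> normalized g \<and> g \<noteq> 0 \<and>
            newton g \<subseteq> hyp0 m \<and> mutable f m g \<longrightarrow>
            deformation_pair (newton f) m (newton g))"
proof (intro conjI allI impI)
  fix P :: "(real ^ 'n) set" and m Q
  assume "lattice_polytope P \<and> deformation_pair P m Q"
  then show "\<exists>f g :: 'n laurent. normalized f \<and> normalized g \<and>
      newton f = P \<and> newton g = Q \<and> mutable f m g"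
    using mutable_if_deformation_pair by metis
next
  fix f g :: "'n laurent" and m
  assume "normalized f \<and> normalized g \<and> g \<noteq> 0 \<and> newton g \<subseteq> hyp0 m \<and> mutable f m g"
  then show "deformation_pair (newton f) m (newton g)"
    by (blast intro: deformation_pair_if_mutable)
qed

end
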